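(* Let $k\ge 2$ and $s\ge 0$ be integers, and let $a_{n,m}$ be the number of ways to place $s$ pairwise non-overlapping $k$-mers on the $n\times m$ rectangular lattice with open boundary conditions in both directions. Then for $n\ge (k+1)s+1$ and $m\ge (k+1)s+1$, $$\sum_{i=0}^{2s+1}(-1)^i\binom{2s+1}{i}a_{n-i,m-i}=0.$$
   Context: The lattice is $\{1,\dots,n\}\times\{1,\dots,m\}$ with open boundaries. A $k$-mer occupies $k$ consecutive sites in one row or one column; a configuration is a set of $s$ $k$-mers with pairwise disjoint site sets. *)

theory Defs
  imports Main
begin

definition lattice :: "nat \<Rightarrow> nat \<Rightarrow> (nat \<times> nat) set" where
  "lattice n m = {1..n} \<times> {1..m}"

definition kmers :: "nat \<Rightarrow> nat \<Rightarrow> nat \<Rightarrow> (nat \<times> nat) set set" where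
  "kmers k n m =
     {S. S \<subseteq> lattice n m \<and>
         (\<exists>i j. S = {(i, j + t) | t. t < k} \<or> S = {(i + t, j) | t. t < k})}"

definition configs :: "nat \<Rightarrow> nat \<Rightarrow> nat \<Rightarrow> nat \<Rightarrow> (nat \<times> nat) set set set" where
  "configs k s n m =
     {C. C \<subseteq> kmers k n m \<and> finite C \<and> card C = s \<and>
         (\<forall>A\<in>C. \<forall>B\<in>C. A \<noteq> B \<longrightarrow> A \<inter> B = {})}"

definition num_configs :: "nat \<Rightarrow> nat \<Rightarrow> nat \<Rightarrow> nat \<Rightarrow> nat" where
  "num_configs k s n m = card (configs k s n m)"

end

theory Submission
  imports Defs
begin

(* Write a_s(n) for the number of configurations of s k-mers on n rows (m fixed).  Cutting a
   configuration at its last free cut p (no k-mer has sites both in rows \<le> p and in rows > p)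
   splits it uniquely into a configuration on the first p rows and a block on rows p + 1..n in
   which every cut is crossed.  A block of c k-mers spans at most c (k - 1) + 1 rows, so
   a_s(n + 1) - a_s(n) is a combination of the a_(s-c)(n + 1 - h) with c \<ge> 1 and h bounded.
   By induction on s, a_s(n) is a polynomial of degree at most s in n once n \<ge> (k - 1) s, and by
   symmetry the count is also such a polynomial in m.  Along the diagonal it then has degree at
   most 2 s, so its (2 s + 1)-st difference vanishes, which is the claimed identity. *)

definition fwd_diff :: "(nat \<Rightarrow> 'a::ab_group_add) \<Rightarrow> nat \<Rightarrow> 'a" where
  "fwd_diff f x = f (Suc x) - f x"

lemma fwd_diff_iter_Suc: "(fwd_diff ^^ Suc j) f x = (fwd_diff ^^ j) f (Suc x) - (fwd_diff ^^ j) f x"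
  by (simp add: fwd_diff_def)

lemma fwd_diff_iter_shift: "(fwd_diff ^^ j) (\<lambda>t. f (t + c)) x = (fwd_diff ^^ j) f (x + c)"
  by (induction j arbitrary: x) (auto simp: fwd_diff_def)

lemma fwd_diff_iter_sum: "(fwd_diff ^^ j) (\<lambda>t. \<Sum>i\<in>I. f i t) x = (\<Sum>i\<in>I. (fwd_diff ^^ j) (f i) x)"
  by (induction j arbitrary: x) (auto simp: fwd_diff_def sum_subtractf)

lemma fwd_diff_iter_cmult:
  "(fwd_diff ^^ j) (\<lambda>t. c * f t) x = c * (fwd_diff ^^ j) f x" for c :: "'a::ring"
  by (induction j arbitrary: x) (auto simp: fwd_diff_def right_diff_distrib)

lemma fwd_diff_iter_cong_ge:
  assumes "\<And>t. N \<le> t \<Longrightarrow> f t = g t" "N \<le> x"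
  shows "(fwd_diff ^^ j) f x = (fwd_diff ^^ j) g x"
  using assms(2) by (induction j arbitrary: x) (auto simp: fwd_diff_def assms(1))

lemma fwd_diff_iter_vanishes_mono:
  assumes "\<And>t. N \<le> t \<Longrightarrow> (fwd_diff ^^ j) f t = 0" "j \<le> i" "N \<le> x"
  shows "(fwd_diff ^^ i) f x = 0"
  using assms(2,3)
  by (induction i arbitrary: x rule: dec_induct) (auto simp: fwd_diff_def assms(1))

lemma fwd_diff_iter_delay_vanishes:
  assumes "\<And>t. N \<le> t \<Longrightarrow> (fwd_diff ^^ j) f t = 0" "j \<le> i" "N + d \<le> x"
  shows "(fwd_diff ^^ i) (\<lambda>t. f (t - d)) x = 0"
proof -
  have "(fwd_diff ^^ i) (\<lambda>t. f (t - d)) x = (fwd_diff ^^ i) f (x - d)"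
    using fwd_diff_iter_shift[of i "\<lambda>t. f (t - d)" d "x - d"] assms(3) by simp
  also have "\<dots> = 0"
  proof (rule fwd_diff_iter_vanishes_mono[where N = N and j = j])
    show "N \<le> x - d"
      using assms(3) by linarith
  qed (use assms(1,2) in auto)
  finally show ?thesis .
qed

lemma fwd_diff_iter_binomial:
  "(fwd_diff ^^ j) f x = (\<Sum>i\<le>j. (-1) ^ (j - i) * of_nat (j choose i) * f (x + i))"
  for f :: "nat \<Rightarrow> 'a::comm_ring_1"
proof (induction j arbitrary: x)
  case 0
  then show ?case by simp
next
  case (Suc j)
  have "(\<Sum>i\<le>Suc j. (-1) ^ (Suc j - i) * of_nat (Suc j choose i) * f (x + i))
      = (-1) ^ Suc j * f x
        + (\<Sum>i\<le>j. (-1) ^ (j - i) * of_nat ((j choose i) + (j choose Suc i)) * f (x + Suc i))"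
    by (subst sum.atMost_Suc_shift) simp
  also have "\<dots> = (\<Sum>i\<le>Suc j. (-1) ^ (Suc j - i) * of_nat (j choose i) * f (x + i))
        + (\<Sum>i\<le>j. (-1) ^ (j - i) * of_nat (j choose i) * f (x + Suc i))"
    by (subst sum.atMost_Suc_shift) (simp add: sum.distrib algebra_simps)
  also have "(\<Sum>i\<le>Suc j. (-1) ^ (Suc j - i) * of_nat (j choose i) * f (x + i))
      = - (\<Sum>i\<le>j. (-1) ^ (j - i) * of_nat (j choose i) * f (x + i))"
    by (simp add: sum_negf[symmetric] Suc_diff_le binomial_eq_0)
  finally show ?case
    using Suc.IH[of x] Suc.IH[of "Suc x"] by (simp add: fwd_diff_def)
qed

lemma fwd_diff_iter_binomial_rev:
  "(fwd_diff ^^ j) f x = (\<Sum>i\<le>j. (-1) ^ i * of_nat (j choose i) * f (x + j - i))"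
  for f :: "nat \<Rightarrow> 'a::comm_ring_1"
proof -
  have "(fwd_diff ^^ j) f x = (\<Sum>i=0..j. (-1) ^ (j - i) * of_nat (j choose i) * f (x + i))"
    by (simp add: fwd_diff_iter_binomial atMost_atLeast0)
  also have "\<dots> = (\<Sum>i=0..j. (-1) ^ (j - (j + 0 - i)) * of_nat (j choose (j + 0 - i)) * f (x + (j + 0 - i)))"
    by (rule sum.atLeastAtMost_rev)
  also have "\<dots> = (\<Sum>i\<le>j. (-1) ^ i * of_nat (j choose i) * f (x + j - i))"
    by (auto simp: atMost_atLeast0 binomial_symmetric[symmetric] intro!: sum.cong)
  finally show ?thesis .
qed

definition diff_fst :: "(nat \<Rightarrow> nat \<Rightarrow> 'a::ab_group_add) \<Rightarrow> nat \<Rightarrow> nat \<Rightarrow> 'a" where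
  "diff_fst F x y = F (Suc x) y - F x y"

definition diff_snd :: "(nat \<Rightarrow> nat \<Rightarrow> 'a::ab_group_add) \<Rightarrow> nat \<Rightarrow> nat \<Rightarrow> 'a" where
  "diff_snd F x y = F x (Suc y) - F x y"

definition diff_diag :: "(nat \<Rightarrow> nat \<Rightarrow> 'a::ab_group_add) \<Rightarrow> nat \<Rightarrow> nat \<Rightarrow> 'a" where
  "diff_diag F x y = F (Suc x) (Suc y) - F x y"

definition shift_snd :: "(nat \<Rightarrow> nat \<Rightarrow> 'a) \<Rightarrow> nat \<Rightarrow> nat \<Rightarrow> 'a" where
  "shift_snd F x y = F x (Suc y)"

lemma shift_snd_zero: "shift_snd (\<lambda>x y. 0) = (\<lambda>x y. 0)"
  by (simp add: fun_eq_iff shift_snd_def)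

lemma diff_fst_zero: "diff_fst (\<lambda>x y. 0) = (\<lambda>x y. 0 :: 'a::ab_group_add)"
  by (simp add: fun_eq_iff diff_fst_def)

lemma diff_snd_zero: "diff_snd (\<lambda>x y. 0) = (\<lambda>x y. 0 :: 'a::ab_group_add)"
  by (simp add: fun_eq_iff diff_snd_def)

lemma diff_diag_eq: "diff_diag F = (\<lambda>x y. shift_snd (diff_fst F) x y + diff_snd F x y)"
  by (simp add: fun_eq_iff diff_diag_def shift_snd_def diff_fst_def diff_snd_def)

lemma diff_fst_iter_shift_snd: "(diff_fst ^^ p) (shift_snd F) = shift_snd ((diff_fst ^^ p) F)"
  by (induction p) (auto simp: diff_fst_def shift_snd_def)

lemma diff_snd_iter_shift_snd: "(diff_snd ^^ q) (shift_snd F) = shift_snd ((diff_snd ^^ q) F)"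
  by (induction q) (auto simp: diff_snd_def shift_snd_def)

lemma diff_fst_iter_diff_snd: "(diff_fst ^^ p) (diff_snd F) = diff_snd ((diff_fst ^^ p) F)"
  by (induction p) (auto simp: diff_fst_def diff_snd_def algebra_simps)

lemma diff_snd_iter_diff_fst: "(diff_snd ^^ q) (diff_fst F) = diff_fst ((diff_snd ^^ q) F)"
  by (induction q) (auto simp: diff_fst_def diff_snd_def algebra_simps)

lemma diff_diag_iter_add:
  "(diff_diag ^^ j) (\<lambda>x y. F x y + G x y) = (\<lambda>x y. (diff_diag ^^ j) F x y + (diff_diag ^^ j) G x y)"
  by (induction j) (auto simp: diff_diag_def algebra_simps)

lemma diff_diag_iter_zero: "(diff_diag ^^ j) (\<lambda>x y. 0) = (\<lambda>x y. 0 :: 'a::ab_group_add)"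
  by (induction j) (auto simp: diff_diag_def)

lemma diff_fst_iter_eq: "(diff_fst ^^ p) F x y = (fwd_diff ^^ p) (\<lambda>t. F t y) x"
  by (induction p arbitrary: x) (auto simp: diff_fst_def fwd_diff_def)

lemma diff_snd_iter_eq: "(diff_snd ^^ q) F x y = (fwd_diff ^^ q) (\<lambda>t. F x t) y"
  by (induction q arbitrary: y) (auto simp: diff_snd_def fwd_diff_def)

lemma diff_diag_iter_eq: "(diff_diag ^^ j) F x y = (fwd_diff ^^ j) (\<lambda>t. F (x + t) (y + t)) 0"
proof (induction j arbitrary: x y)
  case (Suc j)
  have "(diff_diag ^^ Suc j) F x y = (diff_diag ^^ j) F (Suc x) (Suc y) - (diff_diag ^^ j) F x y"
    by (simp only: funpow.simps o_apply diff_diag_def[of "(diff_diag ^^ j) F"])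
  moreover have "(fwd_diff ^^ j) (\<lambda>t. F (x + t) (y + t)) (Suc 0)
      = (fwd_diff ^^ j) (\<lambda>t. F (Suc x + t) (Suc y + t)) 0"
    using fwd_diff_iter_shift[of j "\<lambda>t. F (x + t) (y + t)" 1 0] by simp
  ultimately show ?case
    by (simp add: Suc.IH fwd_diff_iter_Suc del: funpow.simps)
qed simp

lemma diff_diag_iter_binomial:
  "(diff_diag ^^ j) F x y = (\<Sum>i\<le>j. (-1) ^ i * of_nat (j choose i) * F (x + j - i) (y + j - i))"
  for F :: "nat \<Rightarrow> nat \<Rightarrow> 'a::comm_ring_1"
  by (simp add: diff_diag_iter_eq fwd_diff_iter_binomial_rev)

(* diff_diag F = shift_snd (diff_fst F) + diff_snd F, and each summand lowers the degree of F
   in one of its two arguments. *)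
lemma diff_diag_iter_vanishes:
  assumes "(diff_fst ^^ p) F = (\<lambda>x y. 0)" and "(diff_snd ^^ q) F = (\<lambda>x y. 0)"
  shows "(diff_diag ^^ (p + q - 1)) F = (\<lambda>x y. 0)"
  using assms
proof (induction p arbitrary: q F)
  case 0
  then show ?case by (simp add: diff_diag_iter_zero)
next
  case (Suc p)
  note IH_p = Suc.IH
  show ?case
    using Suc.prems
  proof (induction q arbitrary: F)
    case 0
    then show ?case by (simp add: diff_diag_iter_zero)
  next
    case (Suc q)
    have "(diff_fst ^^ p) (shift_snd (diff_fst F)) = shift_snd ((diff_fst ^^ Suc p) F)"
      by (simp only: diff_fst_iter_shift_snd funpow_Suc_right o_apply)
    moreover have "(diff_snd ^^ Suc q) (shift_snd (diff_fst F)) = shift_snd (diff_fst ((diff_snd ^^ Suc q) F))"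
      by (simp only: diff_snd_iter_shift_snd diff_snd_iter_diff_fst)
    ultimately have "(diff_fst ^^ p) (shift_snd (diff_fst F)) = (\<lambda>x y. 0)"
      and "(diff_snd ^^ Suc q) (shift_snd (diff_fst F)) = (\<lambda>x y. 0)"
      using Suc.prems by (simp_all add: shift_snd_zero diff_fst_zero)
    then have fst_part: "(diff_diag ^^ (p + q)) (shift_snd (diff_fst F)) = (\<lambda>x y. 0)"
      using IH_p by fastforce
    have snd_part: "(diff_diag ^^ (p + q)) (diff_snd F) = (\<lambda>x y. 0)"
    proof (cases q)
      case 0
      then show ?thesis
        using Suc.prems(2) by (simp add: diff_diag_iter_zero)
    next
      case (Suc q')
      have "(diff_fst ^^ Suc p) (diff_snd F) = (\<lambda>x y. 0)"
        using Suc.prems(1) by (simp only: diff_fst_iter_diff_snd diff_snd_zero)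
      moreover have "(diff_snd ^^ q) (diff_snd F) = (\<lambda>x y. 0)"
        using Suc.prems(2) by (simp add: funpow_Suc_right del: funpow.simps)
      ultimately show ?thesis
        using Suc.IH \<open>q = Suc q'\<close> by fastforce
    qed
    have "(diff_diag ^^ (Suc p + Suc q - 1)) F = (diff_diag ^^ (p + q)) (diff_diag F)"
      by (simp add: funpow_Suc_right del: funpow.simps)
    also have "\<dots> = (\<lambda>x y. 0)"
      using fst_part snd_part by (simp add: diff_diag_eq diff_diag_iter_add)
    finally show ?case .
  qed
qed

lemma configs_eq:
  "configs k s n m = {C. C \<subseteq> kmers k n m \<and> finite C \<and> card C = s \<and> pairwise disjnt C}"
  by (auto simp: configs_def pairwise_def disjnt_def)

lemma pairwise_disjnt_image_image:
  assumes "inj f"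
  shows "pairwise disjnt ((`) f ` B) \<longleftrightarrow> pairwise disjnt B"
proof -
  have "disjnt (f ` X) (f ` Y) \<longleftrightarrow> disjnt X Y" for X Y
    by (simp add: disjnt_def flip: image_Int[OF assms])
  then show ?thesis
    by (simp add: pairwise_image inj_image_eq_iff[OF assms] pairwise_def)
qed

lemma kmersE:
  assumes "A \<in> kmers k n m"
  obtains i j where "A = {(i, j + t) | t. t < k}" | i j where "A = {(i + t, j) | t. t < k}"
  using assms unfolding kmers_def by blast

lemma kmers_site_bounds:
  assumes "A \<in> kmers k n m" "x \<in> A"
  shows "1 \<le> fst x \<and> fst x \<le> n \<and> 1 \<le> snd x \<and> snd x \<le> m"
  using assms unfolding kmers_def lattice_def by (auto simp: mem_Times_iff)

lemma kmers_nonempty: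
  assumes "0 < k" "A \<in> kmers k n m"
  shows "A \<noteq> {}"
  using assms(2) by (cases rule: kmersE) (use assms(1) in auto)

lemma kmers_restrict_rows:
  assumes "A \<in> kmers k n m" "\<forall>x\<in>A. fst x \<le> p"
  shows "A \<in> kmers k p m"
proof -
  have "A \<subseteq> lattice p m"
    using kmers_site_bounds[OF assms(1)] assms(2) by (auto simp: lattice_def mem_Times_iff)
  then show ?thesis
    using assms(1) unfolding kmers_def by blast
qed

lemma kmers_mono_rows:
  assumes "p \<le> n"
  shows "kmers k p m \<subseteq> kmers k n m"
  using assms unfolding kmers_def lattice_def by auto

lemma finite_kmers: "finite (kmers k n m)"
proof (rule finite_subset)
  show "kmers k n m \<subseteq> Pow (lattice n m)"
    unfolding kmers_def by auto
qed (simp add: lattice_def)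

lemma finite_configs: "finite (configs k s n m)"
  by (rule finite_subset[of _ "Pow (kmers k n m)"]) (auto simp: configs_def finite_kmers)

definition crosses_cut :: "(nat \<times> nat) set \<Rightarrow> nat \<Rightarrow> bool" where
  "crosses_cut A r \<longleftrightarrow> (\<exists>x\<in>A. \<exists>y\<in>A. fst x \<le> r \<and> r < fst y)"

lemma card_crossed_cuts_le:
  assumes "A \<in> kmers k n m"
  shows "finite {r. crosses_cut A r}" "card {r. crosses_cut A r} \<le> k - 1"
proof -
  have "\<exists>i. {r. crosses_cut A r} \<subseteq> {i..<i + k - 1}"
    using assms
  proof (cases rule: kmersE)
    case (1 i j)
    then show ?thesis by (auto simp: crosses_cut_def)
  next
    case (2 i j)
    then have "{r. crosses_cut A r} \<subseteq> {i..<i + k - 1}" by (auto simp: crosses_cut_def)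
    then show ?thesis by blast
  qed
  then obtain i where "{r. crosses_cut A r} \<subseteq> {i..<i + k - 1}" ..
  then show "finite {r. crosses_cut A r}" "card {r. crosses_cut A r} \<le> k - 1"
    using finite_subset card_mono[of "{i..<i + k - 1}"] by fastforce+
qed

definition shift_rows :: "nat \<Rightarrow> nat \<times> nat \<Rightarrow> nat \<times> nat" where
  "shift_rows p x = (fst x + p, snd x)"

lemma inj_shift_rows: "inj (shift_rows p)"
  by (auto simp: inj_def shift_rows_def prod_eq_iff)

lemma crosses_cut_shift_rows: "crosses_cut (shift_rows p ` A) (r + p) \<longleftrightarrow> crosses_cut A r"
  by (auto simp: crosses_cut_def shift_rows_def)

lemma shift_rows_kmers:
  assumes "A \<in> kmers k n m"
  shows "shift_rows p ` A \<in> kmers k (n + p) m"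
proof -
  have "shift_rows p ` A \<subseteq> lattice (n + p) m"
    using kmers_site_bounds[OF assms] by (fastforce simp: lattice_def shift_rows_def)
  moreover have "\<exists>i j. shift_rows p ` A = {(i, j + t) | t. t < k} \<or> shift_rows p ` A = {(i + t, j) | t. t < k}"
    using assms
  proof (cases rule: kmersE)
    case (1 i j)
    then have "shift_rows p ` A = {(i + p, j + t) | t. t < k}"
      by (auto simp: shift_rows_def intro!: image_eqI)
    then show ?thesis by blast
  next
    case (2 i j)
    then have "shift_rows p ` A = {(i + p + t, j) | t. t < k}"
      by (auto simp: shift_rows_def intro!: image_eqI)
    then show ?thesis by blast
  qed
  ultimately show ?thesis
    unfolding kmers_def by blast
qed

lemma vimage_shift_rows_kmers:
  assumes "0 < k" "A \<in> kmers k n m" "\<forall>x\<in>A. p < fst x"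
  shows "shift_rows p -` A \<in> kmers k (n - p) m"
proof -
  have "shift_rows p -` A \<subseteq> lattice (n - p) m"
    using kmers_site_bounds[OF assms(2)] assms(3) by (fastforce simp: lattice_def shift_rows_def)
  moreover have "\<exists>i j. shift_rows p -` A = {(i, j + t) | t. t < k} \<or> shift_rows p -` A = {(i + t, j) | t. t < k}"
    using assms(2)
  proof (cases rule: kmersE)
    case (1 i j)
    then have "p < i"
      using assms(1,3) by auto
    then have "shift_rows p -` A = {(i - p, j + t) | t. t < k}"
      using 1 by (auto simp: shift_rows_def)
    then show ?thesis by blast
  next
    case (2 i j)
    then have "p < i"
      using assms(1,3) by fastforce
    then have "shift_rows p -` A = {(i - p + t, j) | t. t < k}"
      using 2 by (auto simp: shift_rows_def) (metis add_diff_cancel_right')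
    then show ?thesis by blast
  qed
  ultimately show ?thesis
    unfolding kmers_def by blast
qed

lemma image_vimage_shift_rows:
  assumes "\<forall>x\<in>A. p < fst x"
  shows "shift_rows p ` (shift_rows p -` A) = A"
proof -
  have "A \<subseteq> range (shift_rows p)"
  proof
    fix x assume "x \<in> A"
    then have "x = shift_rows p (fst x - p, snd x)"
      using assms by (auto simp: shift_rows_def)
    then show "x \<in> range (shift_rows p)" by blast
  qed
  then show ?thesis by blast
qed

definition blocks :: "nat \<Rightarrow> nat \<Rightarrow> nat \<Rightarrow> nat \<Rightarrow> nat \<Rightarrow> (nat \<times> nat) set set set" where
  "blocks k c p n m =
     {B \<in> configs k c n m. (\<forall>A\<in>B. \<forall>x\<in>A. p < fst x) \<and>
        (\<forall>r. p < r \<and> r < n \<longrightarrow> (\<exists>A\<in>B. crosses_cut A r))}"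

lemma finite_blocks: "finite (blocks k c p n m)"
  using finite_configs by (simp add: blocks_def)

lemma inj_on_image_shift_rows: "inj_on ((`) (shift_rows p)) X"
  by (simp add: inj_on_def inj_image_eq_iff[OF inj_shift_rows])

lemma shift_rows_blocks:
  assumes "p \<le> n" "B \<in> blocks k c 0 (n - p) m"
  shows "(`) (shift_rows p) ` B \<in> blocks k c p n m"
proof -
  have B: "B \<subseteq> kmers k (n - p) m" "finite B" "card B = c" "pairwise disjnt B"
    and crossed: "\<And>r. 0 < r \<Longrightarrow> r < n - p \<Longrightarrow> \<exists>A\<in>B. crosses_cut A r"
    using assms(2) by (auto simp: blocks_def configs_eq)
  have "(`) (shift_rows p) ` B \<subseteq> kmers k n m"
    using B(1) shift_rows_kmers[of _ k "n - p" m p] assms(1) by auto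
  moreover have "card ((`) (shift_rows p) ` B) = c"
    using B(3) by (simp add: card_image inj_on_image_shift_rows)
  moreover have "\<forall>A\<in>(`) (shift_rows p) ` B. \<forall>x\<in>A. p < fst x"
    using B(1) kmers_site_bounds by (fastforce simp: shift_rows_def)
  moreover have "\<exists>A\<in>(`) (shift_rows p) ` B. crosses_cut A r" if "p < r" "r < n" for r
  proof -
    have "0 < r - p" "r - p < n - p"
      using that by auto
    then obtain A where "A \<in> B" "crosses_cut A (r - p)"
      using crossed by blast
    then show ?thesis
      using crosses_cut_shift_rows[of p A "r - p"] that by auto
  qed
  ultimately show ?thesis
    using B(2,4) by (simp add: blocks_def configs_eq pairwise_disjnt_image_image[OF inj_shift_rows])
qed

lemma unshift_rows_blocks:
  assumes "0 < k" "B \<in> blocks k c p n m"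
  shows "(`) (shift_rows p) ` (vimage (shift_rows p)) ` B = B"
    and "vimage (shift_rows p) ` B \<in> blocks k c 0 (n - p) m"
proof -
  have B: "B \<subseteq> kmers k n m" "finite B" "card B = c" "pairwise disjnt B"
    and above: "\<And>A. A \<in> B \<Longrightarrow> \<forall>x\<in>A. p < fst x"
    and crossed: "\<And>r. p < r \<Longrightarrow> r < n \<Longrightarrow> \<exists>A\<in>B. crosses_cut A r"
    using assms(2) by (auto simp: blocks_def configs_eq)
  show shift_unshift: "(`) (shift_rows p) ` (vimage (shift_rows p)) ` B = B"
    using image_vimage_shift_rows[OF above] by (simp add: image_image)
  have kmers: "vimage (shift_rows p) ` B \<subseteq> kmers k (n - p) m"
  proof (rule image_subsetI)
    fix A assume "A \<in> B"
    then show "shift_rows p -` A \<in> kmers k (n - p) m"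
      by (intro vimage_shift_rows_kmers[OF assms(1)] subsetD[OF B(1)] above)
  qed
  moreover have "card (vimage (shift_rows p) ` B) = c"
    using B(3) card_image[OF inj_on_image_shift_rows] shift_unshift by metis
  moreover have "pairwise disjnt (vimage (shift_rows p) ` B)"
    using B(4) pairwise_disjnt_image_image[OF inj_shift_rows[of p], where B = "vimage (shift_rows p) ` B"]
    unfolding shift_unshift by simp
  moreover have "\<forall>A\<in>vimage (shift_rows p) ` B. \<forall>x\<in>A. 0 < fst x"
  proof (intro ballI)
    fix A x assume "A \<in> vimage (shift_rows p) ` B" "x \<in> A"
    from kmers_site_bounds[OF subsetD[OF kmers this(1)] this(2)] show "0 < fst x" by simp
  qed
  moreover have "\<exists>A\<in>vimage (shift_rows p) ` B. crosses_cut A r" if "0 < r" "r < n - p" for r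
  proof -
    have "p < r + p" "r + p < n"
      using that by auto
    then obtain A where "A \<in> B" "crosses_cut A (r + p)"
      using crossed by blast
    then have "crosses_cut (shift_rows p -` A) r"
      using crosses_cut_shift_rows[of p "shift_rows p -` A" r] image_vimage_shift_rows[OF above]
      by metis
    then show ?thesis
      using \<open>A \<in> B\<close> by blast
  qed
  ultimately show "vimage (shift_rows p) ` B \<in> blocks k c 0 (n - p) m"
    using B(2) by (simp add: blocks_def configs_eq)
qed

lemma card_blocks_shift:
  assumes "0 < k" "p \<le> n"
  shows "card (blocks k c p n m) = card (blocks k c 0 (n - p) m)"
proof -
  have "blocks k c p n m = (`) ((`) (shift_rows p)) ` blocks k c 0 (n - p) m"
  proof
    show "(`) ((`) (shift_rows p)) ` blocks k c 0 (n - p) m \<subseteq> blocks k c p n m"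
      using shift_rows_blocks[OF assms(2)] by blast
    show "blocks k c p n m \<subseteq> (`) ((`) (shift_rows p)) ` blocks k c 0 (n - p) m"
    proof
      fix B assume "B \<in> blocks k c p n m"
      from unshift_rows_blocks[OF assms(1) this] show "B \<in> (`) ((`) (shift_rows p)) ` blocks k c 0 (n - p) m"
        by (metis image_eqI)
    qed
  qed
  moreover have "inj_on ((`) ((`) (shift_rows p))) X" for X
    by (simp add: inj_on_def inj_image_eq_iff[OF inj_shift_rows] inj_image_eq_iff)
  ultimately show ?thesis
    by (simp add: card_image)
qed

lemma blocks_empty_if_tall:
  assumes "c * (k - 1) + 1 < h"
  shows "blocks k c 0 h m = {}"
proof (rule ccontr)
  assume "blocks k c 0 h m \<noteq> {}"
  then obtain B where "B \<in> blocks k c 0 h m"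
    by blast
  then have B: "B \<subseteq> kmers k h m" "finite B" "card B = c"
    and crossed: "\<And>r. 0 < r \<Longrightarrow> r < h \<Longrightarrow> \<exists>A\<in>B. crosses_cut A r"
    by (simp_all add: blocks_def configs_eq)
  have "{1..<h} \<subseteq> (\<Union>A\<in>B. {r. crosses_cut A r})"
    using crossed by fastforce
  then have "h - 1 \<le> card (\<Union>A\<in>B. {r. crosses_cut A r})"
    using card_mono B(1,2) card_crossed_cuts_le(1) by (metis card_atLeastLessThan finite_UN subset_iff)
  also have "\<dots> \<le> (\<Sum>A\<in>B. card {r. crosses_cut A r})"
    using B(2) by (rule card_UN_le)
  also have "\<dots> \<le> (\<Sum>A\<in>B. k - 1)"
    using B(1) card_crossed_cuts_le(2) by (intro sum_mono) blast
  also have "\<dots> = c * (k - 1)"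
    using B(3) by simp
  finally show False
    using assms by simp
qed

lemma blocks_zero_one: "blocks k 0 0 1 m = {{}}"
  by (auto simp: blocks_def configs_def)

definition last_free_cut :: "nat \<Rightarrow> (nat \<times> nat) set set \<Rightarrow> nat" where
  "last_free_cut n C = Max {r. r < n \<and> (\<forall>A\<in>C. \<not> crosses_cut A r)}"

lemma last_free_cut_spec:
  assumes "0 < n" "C \<subseteq> kmers k n m"
  shows "last_free_cut n C < n"
    and "\<And>A. A \<in> C \<Longrightarrow> \<not> crosses_cut A (last_free_cut n C)"
    and "\<And>r. last_free_cut n C < r \<Longrightarrow> r < n \<Longrightarrow> \<exists>A\<in>C. crosses_cut A r"
proof -
  let ?S = "{r. r < n \<and> (\<forall>A\<in>C. \<not> crosses_cut A r)}"
  have "0 \<in> ?S"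
    using assms kmers_site_bounds by (fastforce simp: crosses_cut_def)
  moreover have "finite ?S"
    by (rule finite_subset[of _ "{..<n}"]) auto
  ultimately have "last_free_cut n C \<in> ?S" "\<And>r. r \<in> ?S \<Longrightarrow> r \<le> last_free_cut n C"
    unfolding last_free_cut_def using Max_in Max_ge by blast+
  then show "last_free_cut n C < n" "\<And>A. A \<in> C \<Longrightarrow> \<not> crosses_cut A (last_free_cut n C)"
    "\<And>r. last_free_cut n C < r \<Longrightarrow> r < n \<Longrightarrow> \<exists>A\<in>C. crosses_cut A r"
    by force+
qed

lemma configs_rows_le:
  assumes "C \<in> configs k s p m" "A \<in> C" "x \<in> A"
  shows "fst x \<le> p"
  using assms kmers_site_bounds[of A k p m x] by (auto simp: configs_def)

lemma configs_split_last_free_cut: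
  assumes "0 < n" "C \<in> configs k s n m"
  defines "U \<equiv> {A \<in> C. \<forall>x\<in>A. last_free_cut n C < fst x}"
  shows "U \<in> blocks k (card U) (last_free_cut n C) n m"
    and "C - U \<in> configs k (s - card U) (last_free_cut n C) m"
    and "card U \<le> s"
proof -
  have C: "C \<subseteq> kmers k n m" "finite C" "card C = s" "pairwise disjnt C"
    using assms(2) by (simp_all add: configs_eq)
  define p where "p = last_free_cut n C"
  note cut = last_free_cut_spec[OF assms(1) C(1), folded p_def]
  have lower: "\<forall>x\<in>A. fst x \<le> p" if A: "A \<in> C - U" for A
  proof -
    obtain x where "x \<in> A" "fst x \<le> p"
      using A by (auto simp: U_def p_def)
    then show ?thesis
      using cut(2) A by (force simp: crosses_cut_def)
  qed
  have "U \<subseteq> C"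
    by (auto simp: U_def)
  then show "card U \<le> s"
    using C(2,3) card_mono by blast
  have "\<exists>A\<in>U. crosses_cut A r" if r: "p < r" "r < n" for r
  proof -
    obtain A where "A \<in> C" "crosses_cut A r"
      using cut(3) r by blast
    moreover have "A \<notin> C - U"
      using lower \<open>crosses_cut A r\<close> r(1) by (force simp: crosses_cut_def)
    ultimately show ?thesis by blast
  qed
  moreover have "U \<in> configs k (card U) n m"
    using C \<open>U \<subseteq> C\<close> finite_subset pairwise_subset unfolding configs_eq by blast
  ultimately show "U \<in> blocks k (card U) (last_free_cut n C) n m"
    by (simp add: blocks_def U_def p_def)
  have "C - U \<subseteq> kmers k p m"
  proof
    fix A assume "A \<in> C - U"
    then show "A \<in> kmers k p m"
      using C(1) lower kmers_restrict_rows[of A k n m p] by blast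
  qed
  moreover have "card (C - U) = s - card U"
    using C(2,3) \<open>U \<subseteq> C\<close> by (simp add: card_Diff_subset finite_subset)
  ultimately show "C - U \<in> configs k (s - card U) (last_free_cut n C) m"
    using C(2,4) pairwise_subset[OF C(4)] unfolding configs_eq p_def by blast
qed

lemma disjoint_blocks_configs:
  assumes "0 < k" "B \<in> blocks k c p n m" "C \<in> configs k s p m"
  shows "B \<inter> C = {}"
proof -
  have "\<not> (\<forall>x\<in>A. p < fst x)" if "A \<in> C" for A
    using kmers_nonempty[OF assms(1)] configs_rows_le[OF assms(3) that] that assms(3)
    by (fastforce simp: configs_def)
  then show ?thesis
    using assms(2) by (auto simp: blocks_def)
qed

lemma upper_part_union_blocks_configs:
  assumes "0 < k" "B \<in> blocks k c p n m" "C \<in> configs k s p m"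
  shows "{A \<in> B \<union> C. \<forall>x\<in>A. p < fst x} = B"
  using disjoint_blocks_configs[OF assms] assms(2) configs_rows_le[OF assms(3)]
    kmers_nonempty[OF assms(1)] assms(3)
  by (fastforce simp: blocks_def configs_def)

lemma union_blocks_configs:
  assumes "0 < k" "B \<in> blocks k c p n m" "C \<in> configs k s p m" "p \<le> n"
  shows "B \<union> C \<in> configs k (c + s) n m"
proof -
  have B: "B \<subseteq> kmers k n m" "finite B" "card B = c" "pairwise disjnt B"
    and above: "\<forall>A\<in>B. \<forall>x\<in>A. p < fst x"
    using assms(2) by (simp_all add: blocks_def configs_eq)
  have C: "C \<subseteq> kmers k p m" "finite C" "card C = s" "pairwise disjnt C"
    using assms(3) by (simp_all add: configs_eq)
  have "disjnt X Y" if "X \<in> B" "Y \<in> C" for X Y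
    using above configs_rows_le[OF assms(3)] that by (fastforce simp: disjnt_def)
  then have "pairwise disjnt (B \<union> C)"
    using B(4) C(4) by (auto simp: pairwise_def disjnt_sym)
  moreover have "card (B \<union> C) = c + s"
    using B(2,3) C(2,3) disjoint_blocks_configs[OF assms(1-3)] by (simp add: card_Un_disjoint)
  ultimately show ?thesis
    using B C kmers_mono_rows[OF assms(4), of k m] by (auto simp: configs_eq)
qed

lemma last_free_cut_union_blocks_configs:
  assumes "B \<in> blocks k c p n m" "C \<in> configs k s p m" "p < n"
  shows "last_free_cut n (B \<union> C) = p"
proof -
  have above: "\<And>A x. A \<in> B \<Longrightarrow> x \<in> A \<Longrightarrow> p < fst x"
    and crossed: "\<And>r. p < r \<Longrightarrow> r < n \<Longrightarrow> \<exists>A\<in>B. crosses_cut A r"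
    using assms(1) by (simp_all add: blocks_def)
  let ?S = "{r. r < n \<and> (\<forall>A\<in>B \<union> C. \<not> crosses_cut A r)}"
  have "r \<le> p" if "r \<in> ?S" for r
    using crossed[of r] that by force
  moreover have "p \<in> ?S"
    using assms(3) above configs_rows_le[OF assms(2)] by (force simp: crosses_cut_def)
  moreover have "finite ?S"
    by (rule finite_subset[of _ "{..<n}"]) auto
  ultimately show ?thesis
    unfolding last_free_cut_def by (intro Max_eqI)
qed

definition decompositions ::
    "nat \<Rightarrow> nat \<Rightarrow> nat \<Rightarrow> nat \<Rightarrow> (nat \<times> nat \<times> (nat \<times> nat) set set \<times> (nat \<times> nat) set set) set" where
  "decompositions k s n m = (SIGMA p:{..<n}. SIGMA c:{..s}. blocks k c p n m \<times> configs k (s - c) p m)"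

lemma inj_on_union_decompositions:
  assumes "0 < k"
  shows "inj_on (\<lambda>(p, c, B, C). B \<union> C) (decompositions k s n m)"
proof (rule inj_onI)
  fix u v
  assume "u \<in> decompositions k s n m" "v \<in> decompositions k s n m"
    and "(\<lambda>(p, c, B, C). B \<union> C) u = (\<lambda>(p, c, B, C). B \<union> C) v"
  then obtain p c B C p' c' B' C' where uv: "u = (p, c, B, C)" "v = (p', c', B', C')"
    and B: "B \<in> blocks k c p n m" "B' \<in> blocks k c' p' n m"
    and C: "C \<in> configs k (s - c) p m" "C' \<in> configs k (s - c') p' m"
    and "p < n" "p' < n" and union: "B \<union> C = B' \<union> C'"
    by (auto simp: decompositions_def)
  have p: "p = p'"
    using last_free_cut_union_blocks_configs[OF B(1) C(1) \<open>p < n\<close>]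
      last_free_cut_union_blocks_configs[OF B(2) C(2) \<open>p' < n\<close>] union by simp
  have B_eq: "B = B'"
    using upper_part_union_blocks_configs[OF assms B(1) C(1)]
      upper_part_union_blocks_configs[OF assms B(2) C(2)] union p by simp
  have "c = c'"
    using B B_eq by (simp add: blocks_def configs_def)
  moreover have "C = C'"
    using disjoint_blocks_configs[OF assms B(1) C(1)] disjoint_blocks_configs[OF assms B(2) C(2)]
      union B_eq by blast
  ultimately show "u = v"
    using uv p B_eq by simp
qed

lemma union_decompositions:
  assumes "0 < k" "0 < n"
  shows "(\<lambda>(p, c, B, C). B \<union> C) ` decompositions k s n m = configs k s n m"
proof
  show "(\<lambda>(p, c, B, C). B \<union> C) ` decompositions k s n m \<subseteq> configs k s n m"
  proof (clarsimp simp: decompositions_def)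
    fix p c B C
    assume "p < n" "c \<le> s" "B \<in> blocks k c p n m" "C \<in> configs k (s - c) p m"
    then show "B \<union> C \<in> configs k s n m"
      using union_blocks_configs[OF assms(1), of B c p n m C "s - c"] by simp
  qed
  show "configs k s n m \<subseteq> (\<lambda>(p, c, B, C). B \<union> C) ` decompositions k s n m"
  proof
    fix C assume C: "C \<in> configs k s n m"
    define U where "U = {A \<in> C. \<forall>x\<in>A. last_free_cut n C < fst x}"
    have "(last_free_cut n C, card U, U, C - U) \<in> decompositions k s n m"
      using configs_split_last_free_cut[OF assms(2) C, folded U_def]
        last_free_cut_spec(1)[OF assms(2)] C by (auto simp: decompositions_def configs_def)
    moreover have "C = (\<lambda>(p, c, B, C). B \<union> C) (last_free_cut n C, card U, U, C - U)"
      by (auto simp: U_def)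
    ultimately show "C \<in> (\<lambda>(p, c, B, C). B \<union> C) ` decompositions k s n m"
      by (rule rev_image_eqI)
  qed
qed

lemma num_configs_rec:
  assumes "0 < k" "0 < n"
  shows "num_configs k s n m = (\<Sum>p<n. \<Sum>c\<le>s. card (blocks k c p n m) * num_configs k (s - c) p m)"
proof -
  have "num_configs k s n m = card (decompositions k s n m)"
    using card_image[OF inj_on_union_decompositions[OF assms(1), of s n m]]
    by (simp add: num_configs_def union_decompositions[OF assms])
  also have "\<dots> = (\<Sum>p<n. \<Sum>c\<le>s. card (blocks k c p n m) * num_configs k (s - c) p m)"
    by (simp add: decompositions_def card_cartesian_product num_configs_def finite_blocks finite_configs)
  finally show ?thesis .
qed

lemma num_configs_Suc:
  assumes "0 < k"
  shows "num_configs k s (Suc n) m = num_configs k s n m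
    + (\<Sum>h\<in>{1..Suc n}. \<Sum>c\<in>{1..s}. card (blocks k c 0 h m) * num_configs k (s - c) (Suc n - h) m)"
proof -
  define T where "T h c = card (blocks k c 0 h m) * num_configs k (s - c) (Suc n - h) m" for h c
  have T0: "T h 0 = (if h = 1 then num_configs k s n m else 0)" if "1 \<le> h" for h
    using that blocks_empty_if_tall[of 0 k h m] blocks_zero_one[of k m] by (auto simp: T_def)
  have "num_configs k s (Suc n) m = (\<Sum>p<Suc n. \<Sum>c\<le>s. T (Suc n - p) c)"
    unfolding num_configs_rec[OF assms zero_less_Suc] T_def
    by (intro sum.cong[OF refl]) (subst card_blocks_shift[OF assms]; simp)
  also have "\<dots> = (\<Sum>h\<in>{1..Suc n}. \<Sum>c\<le>s. T h c)"
    by (rule sum.reindex_bij_witness[where i = "\<lambda>h. Suc n - h" and j = "\<lambda>p. Suc n - p"]) auto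
  also have "\<dots> = (\<Sum>h\<in>{1..Suc n}. T h 0) + (\<Sum>h\<in>{1..Suc n}. \<Sum>c\<in>{1..s}. T h c)"
    by (simp add: atMost_atLeast0 sum.atLeast_Suc_atMost sum.distrib)
  also have "(\<Sum>h\<in>{1..Suc n}. T h 0) = (\<Sum>h\<in>{1..Suc n}. if h = 1 then num_configs k s n m else 0)"
    by (rule sum.cong) (simp_all add: T0)
  finally show ?thesis
    by (simp add: T_def)
qed

lemma swap_kmers:
  assumes "A \<in> kmers k n m"
  shows "prod.swap ` A \<in> kmers k m n"
proof -
  have "prod.swap ` A \<subseteq> lattice m n"
    using kmers_site_bounds[OF assms] by (fastforce simp: lattice_def)
  moreover have "\<exists>i j. prod.swap ` A = {(i, j + t) | t. t < k} \<or> prod.swap ` A = {(i + t, j) | t. t < k}"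
    using assms
  proof (cases rule: kmersE)
    case (1 i j)
    then have "prod.swap ` A = {(j + t, i) | t. t < k}"
      by (auto intro!: image_eqI)
    then show ?thesis by blast
  next
    case (2 i j)
    then have "prod.swap ` A = {(j, i + t) | t. t < k}"
      by (auto intro!: image_eqI)
    then show ?thesis by blast
  qed
  ultimately show ?thesis
    unfolding kmers_def by blast
qed

lemma swap_configs:
  assumes "C \<in> configs k s n m"
  shows "(`) prod.swap ` C \<in> configs k s m n"
proof -
  have "inj_on ((`) prod.swap) C"
    by (simp add: inj_on_def inj_image_eq_iff)
  then show ?thesis
    using assms swap_kmers pairwise_disjnt_image_image[of prod.swap C]
    by (auto simp: configs_eq card_image)
qed

lemma num_configs_commute: "num_configs k s n m = num_configs k s m n"
proof -
  have "bij_betw ((`) ((`) prod.swap)) (configs k s n m) (configs k s m n)"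
    by (rule bij_betw_byWitness[where f' = "(`) ((`) prod.swap)"])
      (auto simp: image_image swap_configs)
  then show ?thesis
    unfolding num_configs_def by (rule bij_betw_same_card)
qed

lemma fwd_diff_num_configs:
  assumes "0 < k" "(k - 1) * s \<le> t"
  shows "fwd_diff (\<lambda>n. int (num_configs k s n m)) t
    = (\<Sum>h\<in>{1..(k - 1) * s + 1}. \<Sum>c\<in>{1..s}.
         int (card (blocks k c 0 h m)) * int (num_configs k (s - c) (Suc t - h) m))"
proof -
  have "fwd_diff (\<lambda>n. int (num_configs k s n m)) t
      = (\<Sum>h\<in>{1..Suc t}. \<Sum>c\<in>{1..s}.
           int (card (blocks k c 0 h m)) * int (num_configs k (s - c) (Suc t - h) m))"
    using num_configs_Suc[OF assms(1), of s t m] by (simp add: fwd_diff_def)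
  also have "\<dots> = (\<Sum>h\<in>{1..(k - 1) * s + 1}. \<Sum>c\<in>{1..s}.
      int (card (blocks k c 0 h m)) * int (num_configs k (s - c) (Suc t - h) m))"
  proof (rule sum.mono_neutral_right)
    show "{1..(k - 1) * s + 1} \<subseteq> {1..Suc t}"
      using assms(2) by auto
    have "blocks k c 0 h m = {}" if "(k - 1) * s + 1 < h" "c \<le> s" for c h
    proof (rule blocks_empty_if_tall)
      have "c * (k - 1) \<le> (k - 1) * s"
        using that(2) by (metis mult.commute mult_le_mono1)
      then show "c * (k - 1) + 1 < h"
        using that(1) by linarith
    qed
    then show "\<forall>h\<in>{1..Suc t} - {1..(k - 1) * s + 1}. (\<Sum>c\<in>{1..s}.
        int (card (blocks k c 0 h m)) * int (num_configs k (s - c) (Suc t - h) m)) = 0"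
      by auto
  qed simp
  finally show ?thesis .
qed

lemma fwd_diff_iter_num_configs:
  assumes "0 < k" "(k - 1) * s \<le> n"
  shows "(fwd_diff ^^ Suc s) (\<lambda>n. int (num_configs k s n m)) n = 0"
  using assms(2)
proof (induction s arbitrary: n rule: less_induct)
  case (less s)
  let ?a = "\<lambda>j n. int (num_configs k j n m)" and ?b = "\<lambda>c h. int (card (blocks k c 0 h m))"
  have term_vanishes: "?b c h * (fwd_diff ^^ s) (\<lambda>t. ?a (s - c) (Suc t - h)) n = 0"
    if h: "h \<in> {1..(k - 1) * s + 1}" and c: "c \<in> {1..s}" for h c
  proof (cases "c * (k - 1) + 1 < h")
    case True
    then show ?thesis
      using blocks_empty_if_tall by simp
  next
    case False
    have "(k - 1) * (s - c) + c * (k - 1) = (k - 1) * s"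
      using c by (metis add_mult_distrib2 atLeastAtMost_iff le_add_diff_inverse2 mult.commute)
    then have "(k - 1) * (s - c) + (h - 1) \<le> n"
      using False less.prems by linarith
    moreover have "(fwd_diff ^^ Suc (s - c)) (?a (s - c)) t = 0" if "(k - 1) * (s - c) \<le> t" for t
      using less.IH[of "s - c" t] c that by simp
    moreover have "Suc (s - c) \<le> s"
      using c by auto
    ultimately have "(fwd_diff ^^ s) (\<lambda>t. ?a (s - c) (t - (h - 1))) n = 0"
      by (intro fwd_diff_iter_delay_vanishes)
    moreover have "(\<lambda>t. ?a (s - c) (Suc t - h)) = (\<lambda>t. ?a (s - c) (t - (h - 1)))"
      using h by auto
    ultimately show ?thesis
      by simp
  qed
  have "(fwd_diff ^^ Suc s) (?a s) n = (fwd_diff ^^ s) (fwd_diff (?a s)) n"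
    by (simp only: funpow_Suc_right o_apply)
  also have "\<dots> = (fwd_diff ^^ s)
      (\<lambda>t. \<Sum>h\<in>{1..(k - 1) * s + 1}. \<Sum>c\<in>{1..s}. ?b c h * ?a (s - c) (Suc t - h)) n"
    by (rule fwd_diff_iter_cong_ge[where N = "(k - 1) * s"])
      (use less.prems in \<open>simp_all add: fwd_diff_num_configs assms(1)\<close>)
  also have "\<dots> = (\<Sum>h\<in>{1..(k - 1) * s + 1}. \<Sum>c\<in>{1..s}.
      ?b c h * (fwd_diff ^^ s) (\<lambda>t. ?a (s - c) (Suc t - h)) n)"
    by (simp only: fwd_diff_iter_sum fwd_diff_iter_cmult)
  also have "\<dots> = 0"
    using term_vanishes by (intro sum.neutral ballI)
  finally show ?case .
qed

lemma diff_diag_iter_num_configs: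
  fixes k s :: nat
  assumes "0 < k"
  defines "T \<equiv> (k - 1) * s"
  shows "(diff_diag ^^ (2 * s + 1)) (\<lambda>x y. int (num_configs k s (T + x) (T + y))) = (\<lambda>x y. 0)"
proof -
  have vanishes: "(fwd_diff ^^ Suc s) (\<lambda>t. int (num_configs k s (T + t) l)) x = 0" for x l
    using fwd_diff_iter_shift[of "Suc s" "\<lambda>n. int (num_configs k s n l)" T x]
      fwd_diff_iter_num_configs[OF assms(1), of s "x + T" l]
    by (simp add: T_def add.commute)
  have "(diff_fst ^^ Suc s) (\<lambda>x y. int (num_configs k s (T + x) (T + y))) = (\<lambda>x y. 0)"
    by (intro ext) (simp only: diff_fst_iter_eq vanishes)
  moreover have "(diff_snd ^^ Suc s) (\<lambda>x y. int (num_configs k s (T + x) (T + y))) = (\<lambda>x y. 0)"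
  proof (intro ext)
    fix x y
    show "(diff_snd ^^ Suc s) (\<lambda>x y. int (num_configs k s (T + x) (T + y))) x y = 0"
      using vanishes[where x = y and l = "T + x"] by (simp only: diff_snd_iter_eq num_configs_commute[of k s "T + x"])
  qed
  ultimately have "(diff_diag ^^ (Suc s + Suc s - 1)) (\<lambda>x y. int (num_configs k s (T + x) (T + y)))
      = (\<lambda>x y. 0)"
    by (rule diff_diag_iter_vanishes)
  then show ?thesis
    by (simp add: mult_2)
qed

theorem corollary1:
  fixes k s n m :: nat
  assumes "k \<ge> 2"
    and "n \<ge> (k + 1) * s + 1"
    and "m \<ge> (k + 1) * s + 1"
  shows "(\<Sum>i = 0..2 * s + 1. (-1::int) ^ i * int ((2 * s + 1) choose i)
            * int (num_configs k s (n - i) (m - i))) = 0"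
proof -
  define T where "T = (k - 1) * s"
  define N where "N = 2 * s + 1"
  have "(k + 1) * s + 1 = N + T"
    using assms(1) by (cases k) (simp_all add: T_def N_def algebra_simps)
  then obtain x y where n: "n = T + (x + N)" and m: "m = T + (y + N)"
    using assms(2,3) by (metis add.commute add.left_commute le_iff_add)
  have "0 = (diff_diag ^^ N) (\<lambda>x y. int (num_configs k s (T + x) (T + y))) x y"
    using diff_diag_iter_num_configs[of k s] assms(1) by (simp add: T_def N_def)
  also have "\<dots> = (\<Sum>i\<le>N. (-1) ^ i * int (N choose i) * int (num_configs k s (n - i) (m - i)))"
    unfolding diff_diag_iter_binomial n m by (rule sum.cong[OF refl]) simp
  finally show ?thesis
    by (simp add: N_def atMost_atLeast0)
qed

end
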